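(* Construct vectors in $\mathbb{R}^n$ as follows. For each $j=1,2,\dots,n$, choose $n-j+1$ linearly independent vectors in $\mathbb{R}^n$ each of which has its first $j-1$ coordinates equal to zero and its $j$-th coordinate nonzero (so for $j=1$: $n$ linearly independent vectors with nonzero first coordinate; for $j=2$: $n-1$ linearly independent vectors with zero first coordinate and nonzero second coordinate; and so on). The resulting collection $\{x_k\}_{k=1}^{\frac{n(n+1)}{2}}$ is a frame for $\mathbb{R}^n$ which is injective.
   Context: A family $\{x_k\}$ of vectors in a Hilbert space is called injective if whenever a self-adjoint operator $T$ satisfies $\langle Tx_k,x_k\rangle=0$ for all $k$, then $T=0$. *)

theory Defs
  imports "HOL-Analysis.Analysis"
begin

definition is_frame :: "'i set \<Rightarrow> ('i \<Rightarrow> 'a::real_inner) \<Rightarrow> bool" where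
  "is_frame I x \<longleftrightarrow> (\<exists>A B. 0 < A \<and> A \<le> B \<and>
     (\<forall>f. A * (norm f)^2 \<le> (\<Sum>i\<in>I. \<bar>inner f (x i)\<bar>^2) \<and>
          (\<Sum>i\<in>I. \<bar>inner f (x i)\<bar>^2) \<le> B * (norm f)^2))"

definition self_adjoint :: "('a::real_inner \<Rightarrow> 'a) \<Rightarrow> bool" where
  "self_adjoint T \<longleftrightarrow> bounded_linear T \<and> (\<forall>u v. inner (T u) v = inner u (T v))"

definition injective_family :: "'i set \<Rightarrow> ('i \<Rightarrow> 'a::real_inner) \<Rightarrow> bool" where
  "injective_family I x \<longleftrightarrow>
     (\<forall>T. self_adjoint T \<and> (\<forall>i\<in>I. inner (T (x i)) (x i) = 0) \<longrightarrow> T = (\<lambda>_. 0))"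

end

theory Submission
  imports Defs
begin

(*
  Let V j (tail_space j) be the space of vectors whose coordinates before j vanish, so dim (V j) is the
  number of indices i \<ge> j. The j-th group of vectors is an independent subset of V j of that
  size, hence spans V j; the first group spans the whole space. A spanning finite family of a
  finite-dimensional space is a frame, the lower bound being the minimum of the frame sum on
  the unit sphere.

  For injectivity, show by downward induction on j that the form (u, v) \<mapsto> <T u, v> vanishes
  on V j. Split v \<in> V j as v = a e_j + w, where w vanishes up to and including j. Since the
  form vanishes on such w by induction, <T v, v> = a L v with the linear functional
  L v = 2 <T e_j, v> - v_j <T e_j, e_j>. Every vector of the j-th group has a \<noteq> 0 and
  <T v, v> = 0, so L vanishes on the group and thus on V j; this gives <T e_j, e_j> = 0 and
  <T e_j, w> = 0, hence the form vanishes on V j. For the least j this is the whole space, so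
  <T u, T u> = 0 for all u.
*)

lemma sum_inner_square_le:
  fixes X :: "'i \<Rightarrow> 'a::real_inner"
  shows "(\<Sum>i\<in>I. \<bar>inner f (X i)\<bar>^2) \<le> (\<Sum>i\<in>I. (norm (X i))^2) * (norm f)^2"
proof -
  have "\<bar>inner f (X i)\<bar>^2 \<le> (norm (X i))^2 * (norm f)^2" for i
  proof -
    have "\<bar>inner f (X i)\<bar>^2 \<le> (norm f * norm (X i))^2"
      by (rule power_mono[OF Cauchy_Schwarz_ineq2]) simp
    then show ?thesis by (simp add: power_mult_distrib mult.commute)
  qed
  then show ?thesis
    by (simp add: sum_distrib_right sum_mono)
qed

lemma sum_inner_square_lower_bound:
  fixes X :: "'i \<Rightarrow> 'a::euclidean_space"
  assumes "finite I" and "span (X ` I) = UNIV"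
  obtains A where "0 < A" and "\<And>f. A * (norm f)^2 \<le> (\<Sum>i\<in>I. \<bar>inner f (X i)\<bar>^2)"
proof -
  define F where "F f = (\<Sum>i\<in>I. \<bar>inner f (X i)\<bar>^2)" for f
  have F_pos: "0 < F f" if "f \<noteq> 0" for f
  proof -
    have "linear (inner f)"
      by (auto simp: linear_iff inner_add_right)
    then obtain i where "i \<in> I" and "inner f (X i) \<noteq> 0"
      using linear_eq_0_on_span[of "inner f" "X ` I" f] assms(2) \<open>f \<noteq> 0\<close> by auto
    then have "0 < \<bar>inner f (X i)\<bar>^2" by simp
    also have "\<dots> \<le> F f"
      unfolding F_def using \<open>i \<in> I\<close> assms(1) by (intro member_le_sum) auto
    finally show ?thesis .
  qed
  have F_scale: "F (c *\<^sub>R f) = c^2 * F f" for c f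
    by (simp add: F_def sum_distrib_left abs_mult power_mult_distrib)
  have "continuous_on (sphere 0 1) F"
    unfolding F_def by (intro continuous_intros)
  moreover have "sphere (0::'a) 1 \<noteq> {}"
    by simp
  ultimately obtain u where u: "u \<in> sphere 0 1" and u_min: "\<And>f. f \<in> sphere 0 1 \<Longrightarrow> F u \<le> F f"
    using continuous_attains_inf[OF compact_sphere] by blast
  show ?thesis
  proof
    show "0 < F u"
      using u F_pos by (metis mem_sphere_0 norm_zero zero_neq_one)
    show "F u * (norm f)^2 \<le> (\<Sum>i\<in>I. \<bar>inner f (X i)\<bar>^2)" for f
    proof (cases "f = 0")
      case False
      then have "F f = (norm f)^2 * F (f /\<^sub>R norm f)"
        using F_scale[of "norm f" "f /\<^sub>R norm f"] by simp
      moreover have "F u \<le> F (f /\<^sub>R norm f)"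
        using False by (intro u_min) simp
      ultimately have "F u * (norm f)^2 \<le> F f"
        by (metis mult.commute mult_left_mono zero_le_power2)
      then show ?thesis by (simp add: F_def)
    qed (simp add: F_def)
  qed
qed

lemma is_frame_if_spanning:
  fixes X :: "'i \<Rightarrow> 'a::euclidean_space"
  assumes "finite I" and "span (X ` I) = UNIV"
  shows "is_frame I X"
proof -
  obtain A where "0 < A" and lower: "\<And>f. A * (norm f)^2 \<le> (\<Sum>i\<in>I. \<bar>inner f (X i)\<bar>^2)"
    using sum_inner_square_lower_bound[OF assms] by blast
  define B where "B = max A (\<Sum>i\<in>I. (norm (X i))^2)"
  have "(\<Sum>i\<in>I. \<bar>inner f (X i)\<bar>^2) \<le> B * (norm f)^2" for f
    using sum_inner_square_le[of f X I] mult_right_mono[of _ B "(norm f)^2"] unfolding B_def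
    by (meson max.cobounded2 order_trans zero_le_power2)
  then show ?thesis
    unfolding is_frame_def using \<open>0 < A\<close> lower by (intro exI[of _ A] exI[of _ B]) (auto simp: B_def)
qed

definition tail_space :: "'n::{finite,linorder} \<Rightarrow> (real, 'n) vec set" where
  "tail_space j = {v. \<forall>i<j. v $ i = 0}"

lemma dim_tail_space: "dim (tail_space j) = card {i. j \<le> i}"
proof -
  have "tail_space j = {v. \<forall>i. i \<notin> {i. j \<le> i} \<longrightarrow> v $ i = 0}"
    by (auto simp: tail_space_def not_le)
  then show ?thesis
    using dim_substandard_cart[where 'a=real, of "{i. j \<le> i}"] by (simp add: dim_vec_eq)
qed

lemma tail_space_subset_span:
  assumes "S \<subseteq> tail_space j" "independent S" "card S = card {i. j \<le> i}"
  shows "tail_space j \<subseteq> span S"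
  using assms by (intro card_ge_dim_independent) (auto simp: dim_tail_space)

lemma tail_space_Min_UNIV: "tail_space (Min UNIV) = UNIV"
  by (auto simp: tail_space_def not_less)

lemma tail_space_decompose:
  assumes "v \<in> tail_space j"
  obtains a w where "v = a *\<^sub>R axis j 1 + w" and "\<forall>i\<le>j. w $ i = 0" and "a = v $ j"
proof
  show "v = v $ j *\<^sub>R axis j 1 + (v - v $ j *\<^sub>R axis j 1)"
    by simp
  show "\<forall>i\<le>j. (v - v $ j *\<^sub>R axis j 1) $ i = 0"
    using assms by (auto simp: tail_space_def axis_def le_less)
qed simp

lemma strict_tail_space_cases:
  fixes j :: "'n::{finite,linorder}"
  obtains "{v::(real, 'n) vec. \<forall>i\<le>j. v $ i = 0} = {0}"
    | j' where "j < j'" "{v::(real, 'n) vec. \<forall>i\<le>j. v $ i = 0} = tail_space j'"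
proof (cases "\<exists>i. j < i")
  case True
  define j' where "j' = Min {i. j < i}"
  have "j < j'" using True by (auto simp: j'_def)
  moreover have "(i < j') = (i \<le> j)" for i
    using True by (auto simp: j'_def Min_gr_iff) (meson less_irrefl not_le)
  ultimately show ?thesis by (intro that(2)[of j']) (auto simp: tail_space_def)
next
  case False
  then have "(\<forall>i\<le>j. v $ i = 0) = (v = 0)" for v :: "(real, 'n) vec"
    by (auto simp: vec_eq_iff not_less)
  then show ?thesis using that(1) by auto
qed

lemma finite_linorder_downward_induct:
  fixes j :: "'a::{finite,linorder}"
  assumes "\<And>j. (\<And>j'. j < j' \<Longrightarrow> P j') \<Longrightarrow> P j"
  shows "P j"
proof (induction "card {i. j < i}" arbitrary: j rule: less_induct)
  case less
  show ?case
  proof (rule assms)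
    fix j' assume "j < j'"
    then have "{i. j' < i} \<subset> {i. j < i}" by auto
    then show "P j'" by (intro less psubset_card_mono) auto
  qed
qed

lemma inner_self_adjoint_expand:
  fixes T :: "'a::real_inner \<Rightarrow> 'a"
  assumes "linear T" and "\<And>u v. inner (T u) v = inner u (T v)"
  shows "inner (T (a *\<^sub>R e + w)) (b *\<^sub>R e + w') =
    a * b * inner (T e) e + a * inner (T e) w' + b * inner (T e) w + inner (T w) w'"
proof -
  have "inner (T w) e = inner (T e) w"
    using assms(2) by (metis inner_commute)
  then show ?thesis
    by (simp add: linear_add[OF assms(1)] linear_scale[OF assms(1)]
        inner_add_left inner_add_right algebra_simps)
qed

lemma self_adjoint_form_factor_on_tail_space:
  fixes T :: "(real, 'n::{finite,linorder}) vec \<Rightarrow> (real, 'n) vec"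
  assumes lin: "linear T" and sym: "\<And>u v. inner (T u) v = inner u (T v)"
    and strict_tail: "\<And>u v. \<forall>i\<le>j. u $ i = 0 \<Longrightarrow> \<forall>i\<le>j. v $ i = 0 \<Longrightarrow> inner (T u) v = 0"
    and v: "v \<in> tail_space j"
  defines "e \<equiv> axis j 1"
  shows "inner (T v) v = v $ j * (2 * inner (T e) v - v $ j * inner (T e) e)"
proof -
  obtain a w where v_eq: "v = a *\<^sub>R e + w" and w: "\<forall>i\<le>j. w $ i = 0" and a: "a = v $ j"
    using tail_space_decompose[OF v, folded e_def] .
  have "inner (T v) v = a * (2 * inner (T e) (a *\<^sub>R e + w) - a * inner (T e) e)"
    unfolding v_eq using inner_self_adjoint_expand[OF lin sym, of a e w a w] strict_tail[OF w w]
    by (simp add: inner_add_right algebra_simps)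
  from this[folded v_eq, unfolded a] show ?thesis .
qed

lemma self_adjoint_form_vanishes_on_tail_space:
  fixes T :: "(real, 'n::{finite,linorder}) vec \<Rightarrow> (real, 'n) vec"
  assumes lin: "linear T" and sym: "\<And>u v. inner (T u) v = inner u (T v)"
    and strict_tail: "\<And>u v. \<forall>i\<le>j. u $ i = 0 \<Longrightarrow> \<forall>i\<le>j. v $ i = 0 \<Longrightarrow> inner (T u) v = 0"
    and S: "S \<subseteq> tail_space j" "tail_space j \<subseteq> span S"
    and S_form: "\<And>s. s \<in> S \<Longrightarrow> s $ j \<noteq> 0 \<and> inner (T s) s = 0"
    and u: "u \<in> tail_space j" and v: "v \<in> tail_space j"
  shows "inner (T u) v = 0"
proof -
  define e :: "(real, 'n) vec" where "e = axis j 1"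
  define c where "c = inner (T e) e"
  define L where "L w = 2 * inner (T e) w - w $ j * c" for w
  have lin_L: "linear L"
    by (auto simp: L_def linear_iff inner_add_right algebra_simps)
  have "L s = 0" if "s \<in> S" for s
  proof -
    have "inner (T s) s = s $ j * L s"
      unfolding L_def c_def e_def
      by (rule self_adjoint_form_factor_on_tail_space[OF lin sym strict_tail subsetD[OF S(1) that]])
    then show ?thesis
      using S_form[OF that] by simp
  qed
  then have L_tail: "L w = 0" if "w \<in> tail_space j" for w
    using linear_eq_0_on_span[OF lin_L] S(2) that by blast
  have "e $ j = 1" and "e \<in> tail_space j"
    by (auto simp: e_def tail_space_def axis_def)
  then have "c = 0"
    using L_tail[of e] by (simp add: L_def c_def)
  have Te_strict: "inner (T e) w = 0" if "\<forall>i\<le>j. w $ i = 0" for w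
  proof -
    have "w \<in> tail_space j" and "w $ j = 0"
      using that by (auto simp: tail_space_def)
    then show ?thesis using L_tail[of w] by (simp add: L_def)
  qed
  obtain a w where u_eq: "u = a *\<^sub>R e + w" and w: "\<forall>i\<le>j. w $ i = 0"
    using tail_space_decompose[OF u, folded e_def] by blast
  obtain b w' where v_eq: "v = b *\<^sub>R e + w'" and w': "\<forall>i\<le>j. w' $ i = 0"
    using tail_space_decompose[OF v, folded e_def] by blast
  have "inner (T u) v = a * b * c + a * inner (T e) w' + b * inner (T e) w + inner (T w) w'"
    unfolding u_eq v_eq c_def by (rule inner_self_adjoint_expand[OF lin sym])
  also have "\<dots> = 0"
    using \<open>c = 0\<close> Te_strict[OF w] Te_strict[OF w'] strict_tail[OF w w'] by simp
  finally show ?thesis .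
qed

lemma self_adjoint_eq_0_if_form_vanishes_on_tail_spans:
  fixes T :: "(real, 'n::{finite,linorder}) vec \<Rightarrow> (real, 'n) vec"
    and S :: "'n \<Rightarrow> (real, 'n) vec set"
  assumes lin: "linear T" and sym: "\<And>u v. inner (T u) v = inner u (T v)"
    and S: "\<And>j. S j \<subseteq> tail_space j" "\<And>j. tail_space j \<subseteq> span (S j)"
    and S_form: "\<And>j s. s \<in> S j \<Longrightarrow> s $ j \<noteq> 0 \<and> inner (T s) s = 0"
  shows "T = (\<lambda>_. 0)"
proof -
  have tail: "\<forall>u\<in>tail_space j. \<forall>v\<in>tail_space j. inner (T u) v = 0" for j
  proof (induction j rule: finite_linorder_downward_induct)
    case (1 j)
    have strict_tail: "inner (T u) v = 0" if "\<forall>i\<le>j. u $ i = 0" "\<forall>i\<le>j. v $ i = 0" for u v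
    proof (cases rule: strict_tail_space_cases[of j])
      case 1
      then have "u = 0" using that(1) by blast
      then show ?thesis using lin by (simp add: linear_0)
    next
      case (2 j')
      then have "u \<in> tail_space j'" "v \<in> tail_space j'"
        using that by blast+
      then show ?thesis using "1.IH"[OF \<open>j < j'\<close>] by blast
    qed
    show ?case
      using self_adjoint_form_vanishes_on_tail_space[OF lin sym strict_tail S(1,2) S_form] by blast
  qed
  show ?thesis
  proof
    fix u
    have "inner (T u) (T u) = 0"
      using tail[of "Min UNIV"] by (simp add: tail_space_Min_UNIV)
    then show "T u = 0" by simp
  qed
qed

theorem mainTheorem4:
  fixes x :: "'n::{finite,wellorder} \<Rightarrow> nat \<Rightarrow> real^('n::{finite,wellorder})"
  assumes zero_before: "\<And>j k i. k < card {i. j \<le> i} \<Longrightarrow> i < j \<Longrightarrow> x j k $ i = 0"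
      and nonzero_at: "\<And>j k. k < card {i. j \<le> i} \<Longrightarrow> x j k $ j \<noteq> 0"
      and distinct: "\<And>j. inj_on (x j) {..<card {i. j \<le> i}}"
      and indep: "\<And>j. independent (x j ` {..<card {i. j \<le> i}})"
  shows "is_frame (SIGMA j:UNIV. {..<card {i. j \<le> i}}) (\<lambda>(j, k). x j k)
       \<and> injective_family (SIGMA j:UNIV. {..<card {i. j \<le> i}}) (\<lambda>(j, k). x j k)"
proof -
  define I where "I = (SIGMA j:UNIV. {..<card {i::'n. j \<le> i}})"
  define X where "X = (\<lambda>(j, k). x j k)"
  define S where "S j = x j ` {..<card {i. j \<le> i}}" for j
  have S_tail: "S j \<subseteq> tail_space j" for j
    using zero_before by (auto simp: S_def tail_space_def)
  have tail_span: "tail_space j \<subseteq> span (S j)" for j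
    using S_tail indep distinct by (intro tail_space_subset_span) (auto simp: S_def card_image)
  have "S j \<subseteq> X ` I" for j
    by (auto simp: S_def X_def I_def)
  then have "span (X ` I) = UNIV"
    using tail_span[of "Min UNIV"] span_mono[of "S (Min UNIV)" "X ` I"]
    by (auto simp: tail_space_Min_UNIV)
  then have "is_frame I X"
    by (intro is_frame_if_spanning) (simp add: I_def)
  moreover have "injective_family I X"
    unfolding injective_family_def self_adjoint_def
  proof (intro allI impI, elim conjE)
    fix T :: "(real, 'n) vec \<Rightarrow> (real, 'n) vec"
    assume "bounded_linear T" "\<forall>u v. inner (T u) v = inner u (T v)" "\<forall>i\<in>I. inner (T (X i)) (X i) = 0"
    then show "T = (\<lambda>_. 0)"
      using S_tail tail_span nonzero_at bounded_linear.linear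
      by (intro self_adjoint_eq_0_if_form_vanishes_on_tail_spans[of T S])
        (auto simp: S_def I_def X_def)
  qed
  ultimately show ?thesis
    by (simp add: I_def X_def)
qed

end
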